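(* Let $n\ge1$, $\tau\in\mathfrak{S}_n$ and $1\le a<b\le n$. Then $\lambda(\tau)=\lambda\big(\overline{\tau}^{[a,b]}\big)$.
   Context: Permutations in one-line notation; $\mathrm{st}(a_1,\dots,a_p)$ is the permutation with the same relative order as distinct integers $a_i$. Trees: $\mathcal{Y}_n$ = rooted planar binary trees with $n$ internal nodes, $\mathcal{Y}_0=\{|\}$; $s\vee t$ = tree whose root has left subtree $s$ and right subtree $t$; $t=t_l\vee t_r$ uniquely. For $\sigma\in\mathfrak{S}_p,\tau\in\mathfrak{S}_q$, $\sigma\vee\tau=(\sigma(1)+q,\dots,\sigma(p)+q,p+q+1,\tau(1),\dots,\tau(q))$. $\lambda:\mathfrak{S}_n\to\mathcal{Y}_n$: $\lambda(\mathrm{id}_0)=|$, and for $j=\sigma^{-1}(n)$, $\lambda(\sigma)=\lambda(\mathrm{st}(\sigma(1),..,\sigma(j-1)))\vee\lambda(\mathrm{st}(\sigma(j+1),..,\sigma(n)))$. $\gamma:\mathcal{Y}_n\to\mathfrak{S}_n$: $\gamma(|)=\mathrm{id}_0$, $\gamma(t)=\gamma(t_l)\vee\gamma(t_r)$. For any permutation $\sigma$, $\overline{\sigma}:=\gamma(\lambda(\sigma))$. Given $\tau\in\mathfrak{S}_n$ and $1\le a<b\le n$, let $\mathsf{S}=\{s_1<\dots<s_m\}=\tau^{-1}([a,b])$, let $\sigma=\mathrm{st}(\tau(s_1),\dots,\tau(s_m))$, and define $\overline{\tau}^{[a,b]}\in\mathfrak{S}_n$ by $\overline{\tau}^{[a,b]}(i)=\tau(i)$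 if $i\notin\mathsf{S}$ and $\overline{\tau}^{[a,b]}(s_j)=a-1+\overline{\sigma}(j)$. *)

theory Defs
  imports Main
begin

text \<open>Permutations are lists in one-line notation (values 1..n).
  Rooted planar binary trees: Leaf is the tree with no internal node,
  Node s t is s \<or> t.\<close>

datatype tree = Leaf | Node tree tree

definition perms :: "nat \<Rightarrow> nat list set" where
  "perms n = {xs. distinct xs \<and> set xs = {1..n}}"

definition st :: "nat list \<Rightarrow> nat list" where
  "st xs = map (\<lambda>x. card {y \<in> set xs. y \<le> x}) xs"

lemma length_st[simp]: "length (st xs) = length xs"
  by (simp add: st_def)

text \<open>The map lambda from permutations to trees; j is the (0-based) position of n
  (the guard j < length xs always holds for genuine permutations).\<close>
function lam :: "nat list \<Rightarrow> tree" where
  "lam xs = (if xs = [] then Leaf else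
     (let j = (LEAST i. xs ! i = length xs) in
      if j < length xs then Node (lam (st (take j xs))) (lam (st (drop (Suc j) xs)))
      else Leaf))"
  by pat_completeness auto
termination
  by (relation "measure length") (auto simp: Let_def)

definition vee :: "nat list \<Rightarrow> nat list \<Rightarrow> nat list" where
  "vee s t = map (\<lambda>x. x + length t) s @ [length s + length t + 1] @ t"

fun gam :: "tree \<Rightarrow> nat list" where
  "gam Leaf = []"
| "gam (Node l r) = vee (gam l) (gam r)"

definition pbar :: "nat list \<Rightarrow> nat list" where
  "pbar s = gam (lam s)"

text \<open>tau-bar^[a,b]; positions are 0-based here, index j of s_j is the number of
  earlier positions in S.\<close>
definition bar_int :: "nat list \<Rightarrow> nat \<Rightarrow> nat \<Rightarrow> nat list" where
  "bar_int \<tau> a b =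
     (let \<sigma> = st (filter (\<lambda>x. a \<le> x \<and> x \<le> b) \<tau>);
          ob = pbar \<sigma>
      in map (\<lambda>i. if a \<le> \<tau> ! i \<and> \<tau> ! i \<le> b
                  then a - 1 + ob ! card {k. k < i \<and> a \<le> \<tau> ! k \<and> \<tau> ! k \<le> b}
                  else \<tau> ! i) [0..<length \<tau>])"

end

theory Submission
  imports Defs "HOL-Library.Multiset"
begin

(* The tree \<lambda>(\<tau>) of a permutation is determined by, and determines, the map sending each
   window [i..k] of positions to the position of the largest entry in it: the root of \<lambda>(\<tau>)
   records where the largest value n sits, and the two subtrees record the same data for the
   parts left and right of it.
   Passing from \<tau> to its [a,b]-bar keeps every value outside [a,b] in place and only
   rearranges the values in [a,b] among the positions carrying them. As [a,b] is an interval,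
   a value outside it compares in the same way with all values inside it, so the position of a
   window maximum can only move if that maximum lies in [a,b]. But the positions of a window
   carrying values in [a,b] form a window of the subsequence \<sigma>, which gets replaced by a shift
   of gam(\<lambda>(\<sigma>)), and that permutation has the same tree, hence the same window maxima, as \<sigma>. *)

lemma card_lower_set_less_iff:
  assumes "finite A" "x \<in> A" "x' \<in> A"
  shows "card {y \<in> A. y \<le> x} < card {y \<in> A. y \<le> x'} \<longleftrightarrow> x < (x' :: 'a :: linorder)"
proof
  assume "x < x'"
  then have "{y \<in> A. y \<le> x} \<subseteq> {y \<in> A. y \<le> x'}" "x' \<in> {y \<in> A. y \<le> x'}"
    "x' \<notin> {y \<in> A. y \<le> x}"
    using assms by auto
  then have "{y \<in> A. y \<le> x} \<subset> {y \<in> A. y \<le> x'}"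
    by blast
  then show "card {y \<in> A. y \<le> x} < card {y \<in> A. y \<le> x'}"
    using assms(1) by (simp add: psubset_card_mono)
next
  assume "card {y \<in> A. y \<le> x} < card {y \<in> A. y \<le> x'}"
  moreover have "card {y \<in> A. y \<le> x'} \<le> card {y \<in> A. y \<le> x}" if "x' \<le> x"
    using assms(1) that by (intro card_mono) auto
  ultimately show "x < x'" by (meson not_le)
qed

lemma st_nth_less_iff:
  assumes "i < length xs" "j < length xs"
  shows "st xs ! i < st xs ! j \<longleftrightarrow> xs ! i < xs ! j"
  using assms by (simp add: st_def card_lower_set_less_iff)

lemma length_perms: "xs \<in> perms n \<Longrightarrow> length xs = n"
  unfolding perms_def using distinct_card by fastforce

lemma st_in_perms:
  assumes "distinct xs"
  shows "st xs \<in> perms (length xs)"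
proof -
  have "inj_on (\<lambda>x. card {y \<in> set xs. y \<le> x}) (set xs)"
  proof (rule inj_onI)
    fix x x' assume "x \<in> set xs" "x' \<in> set xs"
      "card {y \<in> set xs. y \<le> x} = card {y \<in> set xs. y \<le> x'}"
    then show "x = x'"
      using card_lower_set_less_iff[of "set xs" x x'] card_lower_set_less_iff[of "set xs" x' x]
      by (cases x x' rule: linorder_cases) auto
  qed
  then have dist: "distinct (st xs)"
    using assms by (simp add: st_def distinct_map)
  have "set (st xs) \<subseteq> {1..card (set xs)}"
  proof
    fix v assume "v \<in> set (st xs)"
    then obtain x where x: "x \<in> set xs" "v = card {y \<in> set xs. y \<le> x}"
      by (auto simp: st_def)
    then have "x \<in> {y \<in> set xs. y \<le> x}" by simp
    then have "0 < v"
      using x by (auto simp: card_gt_0_iff)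
    moreover have "v \<le> card (set xs)"
      unfolding x by (rule card_mono) auto
    ultimately show "v \<in> {1..card (set xs)}" by simp
  qed
  moreover have "card (set (st xs)) = card (set xs)"
    using dist assms by (simp add: distinct_card)
  ultimately have "set (st xs) = {1..length xs}"
    using assms by (simp add: card_subset_eq distinct_card)
  with dist show ?thesis by (simp add: perms_def)
qed

lemma st_perms_id:
  assumes "xs \<in> perms n"
  shows "st xs = xs"
proof -
  have "{y \<in> set xs. y \<le> x} = {1..x}" if "x \<in> set xs" for x
    using assms that by (auto simp: perms_def)
  then show ?thesis by (simp add: st_def map_idI)
qed

lemma st_map_add: "st (map ((+) c) xs) = st xs"
proof -
  have "{y \<in> set (map ((+) c) xs). y \<le> c + x} = (+) c ` {y \<in> set xs. y \<le> x}" for x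
    by auto
  then show ?thesis by (simp add: st_def card_image)
qed

lemma st_take_in_perms: "xs \<in> perms n \<Longrightarrow> j \<le> n \<Longrightarrow> st (take j xs) \<in> perms j"
  using st_in_perms[of "take j xs"] length_perms[of xs n] by (simp add: perms_def)

lemma st_drop_in_perms: "xs \<in> perms n \<Longrightarrow> st (drop j xs) \<in> perms (n - j)"
  using st_in_perms[of "drop j xs"] length_perms[of xs n] by (simp add: perms_def)

lemma perms_obtain_max_pos:
  assumes "xs \<in> perms n" "0 < n"
  obtains j where "j < n" "xs ! j = n"
proof -
  have "n \<in> set xs" using assms by (auto simp: perms_def)
  then show ?thesis using that length_perms[OF assms(1)] by (auto simp: in_set_conv_nth)
qed

lemma perms_nth_less_max:
  assumes "xs \<in> perms n" "xs ! j = n" "j < n" "q < n" "q \<noteq> j"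
  shows "xs ! q < n"
proof -
  have "xs ! q \<in> {1..n}" "xs ! q \<noteq> xs ! j"
    using assms length_perms[OF assms(1)] by (auto simp: perms_def nth_eq_iff_index_eq)
  with assms(2) show ?thesis by auto
qed

lemma lam_split_at_max:
  assumes "xs \<in> perms n" "j < n" "xs ! j = n"
  shows "lam xs = Node (lam (st (take j xs))) (lam (st (drop (Suc j) xs)))"
proof -
  have "(LEAST i. xs ! i = length xs) = j"
  proof (rule Least_equality)
    show "xs ! j = length xs" using assms length_perms[OF assms(1)] by simp
  next
    fix i assume "xs ! i = length xs"
    then show "j \<le> i"
      using perms_nth_less_max[OF assms(1,3,2), of i] length_perms[OF assms(1)] assms(2)
      by (cases "i < n") auto
  qed
  moreover have "xs \<noteq> []" using length_perms[OF assms(1)] assms(2) by auto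
  ultimately show ?thesis
    using assms length_perms[OF assms(1)] by (subst lam.simps) (simp add: Let_def)
qed

declare lam.simps[simp del]

lemma size_lam: "xs \<in> perms n \<Longrightarrow> size (lam xs) = n"
proof (induction n arbitrary: xs rule: less_induct)
  case (less n)
  show ?case
  proof (cases "n = 0")
    case True
    then show ?thesis using less.prems length_perms by (auto simp: lam.simps)
  next
    case False
    then obtain j where j: "j < n" "xs ! j = n"
      using perms_obtain_max_pos less.prems by blast
    then show ?thesis
      using lam_split_at_max[OF less.prems j] less.IH[of j] less.IH[of "n - Suc j"]
        st_take_in_perms[OF less.prems, of j] st_drop_in_perms[OF less.prems, of "Suc j"]
      by simp
  qed
qed

lemma vee_in_perms:
  assumes "s \<in> perms p" "t \<in> perms q"
  shows "vee s t \<in> perms (p + q + 1)"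
proof -
  have "set (map ((+) q) s) = (+) q ` {1..p}" using assms(1) by (simp add: perms_def add.commute)
  also have "\<dots> = {q + 1..q + p}" by simp
  finally show ?thesis
    using assms length_perms[OF assms(1)] length_perms[OF assms(2)]
    by (auto simp: perms_def vee_def distinct_map add.commute)
qed

lemma lam_vee:
  assumes "s \<in> perms p" "t \<in> perms q"
  shows "lam (vee s t) = Node (lam s) (lam t)"
proof -
  have ls: "length s = p" and lt: "length t = q"
    using assms length_perms by auto
  have "vee s t ! p = p + q + 1"
    by (simp add: vee_def nth_append ls lt)
  then have "lam (vee s t) = Node (lam (st (take p (vee s t)))) (lam (st (drop (Suc p) (vee s t))))"
    using lam_split_at_max[OF vee_in_perms[OF assms]] by simp
  also have "take p (vee s t) = map ((+) q) s"
    by (simp add: vee_def ls lt add.commute)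
  also have "drop (Suc p) (vee s t) = t"
    by (simp add: vee_def ls)
  finally show ?thesis
    using assms by (simp add: st_map_add st_perms_id)
qed

lemma gam_in_perms: "gam t \<in> perms (size t)"
proof (induction t)
  case Leaf
  then show ?case by (simp add: perms_def)
next
  case (Node l r)
  then show ?case using vee_in_perms[OF Node.IH] by simp
qed

lemma lam_gam: "lam (gam t) = t"
  by (induction t) (simp add: lam.simps, simp add: lam_vee[OF gam_in_perms gam_in_perms])

definition is_interval_max :: "'a :: linorder list \<Rightarrow> nat \<Rightarrow> nat \<Rightarrow> nat \<Rightarrow> bool" where
  "is_interval_max xs i k p \<longleftrightarrow> i \<le> p \<and> p \<le> k \<and> k < length xs \<and>
     (\<forall>q. i \<le> q \<longrightarrow> q \<le> k \<longrightarrow> q \<noteq> p \<longrightarrow> xs ! q < xs ! p)"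

lemma is_interval_max_st: "is_interval_max (st xs) = is_interval_max xs"
  by (auto simp: fun_eq_iff is_interval_max_def st_nth_less_iff)

lemma is_interval_max_take: "is_interval_max (take j xs) i k p \<longleftrightarrow> k < j \<and> is_interval_max xs i k p"
  by (auto simp: is_interval_max_def)

lemma is_interval_max_drop:
  "is_interval_max (drop s xs) i k p \<longleftrightarrow> is_interval_max xs (i + s) (k + s) (p + s)"
proof -
  have shift: "(\<forall>q. i + s \<le> q \<longrightarrow> q \<le> k + s \<longrightarrow> q \<noteq> p + s \<longrightarrow> Q q) \<longleftrightarrow>
        (\<forall>q. i \<le> q \<longrightarrow> q \<le> k \<longrightarrow> q \<noteq> p \<longrightarrow> Q (q + s))" for Q
  proof (intro iffI allI impI)
    fix q assume shifted: "\<forall>q. i \<le> q \<longrightarrow> q \<le> k \<longrightarrow> q \<noteq> p \<longrightarrow> Q (q + s)"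
      and q: "i + s \<le> q" "q \<le> k + s" "q \<noteq> p + s"
    have "Q (q - s + s)"
      using q by (intro shifted[rule_format]) auto
    with q show "Q q" by simp
  qed simp
  show ?thesis
    by (auto simp: is_interval_max_def shift add.commute)
qed

lemma is_interval_max_perms_max_iff:
  assumes "xs \<in> perms n" "xs ! j = n" "i \<le> j" "j \<le> k" "k < n"
  shows "is_interval_max xs i k p \<longleftrightarrow> p = j"
proof
  assume max: "is_interval_max xs i k p"
  show "p = j"
  proof (rule ccontr)
    assume "p \<noteq> j"
    then have "xs ! j < xs ! p" "p < n"
      using max assms(3-5) unfolding is_interval_max_def by auto
    then show False
      using perms_nth_less_max[OF assms(1,2), of p] \<open>p \<noteq> j\<close> assms by simp
  qed
next
  assume "p = j"
  then show "is_interval_max xs i k p"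
    using assms perms_nth_less_max[OF assms(1,2)] length_perms[OF assms(1)]
    unfolding is_interval_max_def by auto
qed

lemma interval_max_eq_iff_split_at_max:
  assumes "xs \<in> perms n" "ys \<in> perms n" "xs ! j = n" "ys ! j = n"
  shows "is_interval_max xs = is_interval_max ys \<longleftrightarrow>
    is_interval_max (take j xs) = is_interval_max (take j ys) \<and>
    is_interval_max (drop (Suc j) xs) = is_interval_max (drop (Suc j) ys)"
proof
  assume "is_interval_max xs = is_interval_max ys"
  then show "is_interval_max (take j xs) = is_interval_max (take j ys) \<and>
    is_interval_max (drop (Suc j) xs) = is_interval_max (drop (Suc j) ys)"
    by (simp add: fun_eq_iff is_interval_max_take is_interval_max_drop)
next
  assume "is_interval_max (take j xs) = is_interval_max (take j ys) \<and>
    is_interval_max (drop (Suc j) xs) = is_interval_max (drop (Suc j) ys)"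
  then have take: "is_interval_max (take j xs) = is_interval_max (take j ys)"
    and drop: "is_interval_max (drop (Suc j) xs) = is_interval_max (drop (Suc j) ys)"
    by simp_all
  have "is_interval_max xs i k p \<longleftrightarrow> is_interval_max ys i k p" for i k p
  proof -
    consider "n \<le> k" | "k < j" | "i \<le> j" "j \<le> k" "k < n" | "j < i" "k < n"
      by linarith
    then show ?thesis
    proof cases
      case 1
      then show ?thesis
        using length_perms assms(1,2) by (simp add: is_interval_max_def)
    next
      case 2
      then show ?thesis
        using take is_interval_max_take[of j xs i k p] is_interval_max_take[of j ys i k p] by simp
    next
      case 3
      then show ?thesis
        using is_interval_max_perms_max_iff[OF assms(1,3)] is_interval_max_perms_max_iff[OF assms(2,4)]
        by simp
    next
      case 4
      show ?thesis
      proof (cases "i \<le> p \<and> p \<le> k")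
        case True
        then have "is_interval_max zs i k p \<longleftrightarrow>
            is_interval_max (drop (Suc j) zs) (i - Suc j) (k - Suc j) (p - Suc j)" for zs :: "nat list"
          using 4 by (simp add: is_interval_max_drop)
        then show ?thesis
          using drop by simp
      next
        case False
        then show ?thesis by (auto simp: is_interval_max_def)
      qed
    qed
  qed
  then show "is_interval_max xs = is_interval_max ys"
    by (simp add: fun_eq_iff)
qed

theorem lam_eq_iff_interval_max_eq:
  "xs \<in> perms n \<Longrightarrow> ys \<in> perms n \<Longrightarrow> lam xs = lam ys \<longleftrightarrow> is_interval_max xs = is_interval_max ys"
proof (induction n arbitrary: xs ys rule: less_induct)
  case (less n)
  show ?case
  proof (cases "n = 0")
    case True
    then have "xs = []" "ys = []"
      using less.prems length_perms by auto
    then show ?thesis by simp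
  next
    case False
    obtain j where j: "j < n" "xs ! j = n"
      using perms_obtain_max_pos less.prems(1) False by blast
    obtain j' where j': "j' < n" "ys ! j' = n"
      using perms_obtain_max_pos less.prems(2) False by blast
    have lam_xs: "lam xs = Node (lam (st (take j xs))) (lam (st (drop (Suc j) xs)))"
      using lam_split_at_max[OF less.prems(1) j] .
    have lam_ys: "lam ys = Node (lam (st (take j' ys))) (lam (st (drop (Suc j') ys)))"
      using lam_split_at_max[OF less.prems(2) j'] .
    have IH_take: "lam (st (take j xs)) = lam (st (take j ys)) \<longleftrightarrow>
        is_interval_max (take j xs) = is_interval_max (take j ys)"
      using less.IH[OF j(1) st_take_in_perms[OF less.prems(1)] st_take_in_perms[OF less.prems(2)]] j
      by (simp add: is_interval_max_st)
    have IH_drop: "lam (st (drop (Suc j) xs)) = lam (st (drop (Suc j) ys)) \<longleftrightarrow>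
        is_interval_max (drop (Suc j) xs) = is_interval_max (drop (Suc j) ys)"
      using less.IH[of "n - Suc j"] st_drop_in_perms[OF less.prems(1)] st_drop_in_perms[OF less.prems(2)] j
      by (simp add: is_interval_max_st)
    show ?thesis
    proof
      assume "lam xs = lam ys"
      moreover have "size (lam (st (take j xs))) = j" "size (lam (st (take j' ys))) = j'"
        using size_lam st_take_in_perms less.prems j j' by (simp_all add: less_imp_le)
      ultimately have "j = j'"
        using lam_xs lam_ys by auto
      then show "is_interval_max xs = is_interval_max ys"
        using \<open>lam xs = lam ys\<close> lam_xs lam_ys IH_take IH_drop j j'
          interval_max_eq_iff_split_at_max[OF less.prems] by simp
    next
      assume max_eq: "is_interval_max xs = is_interval_max ys"
      have "is_interval_max xs 0 (n - 1) j"
        using is_interval_max_perms_max_iff[OF less.prems(1) j(2)] j(1) by simp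
      then have "j = j'"
        using max_eq is_interval_max_perms_max_iff[OF less.prems(2) j'(2)] j'(1) by simp
      then show "lam xs = lam ys"
        using max_eq lam_xs lam_ys IH_take IH_drop j j'
          interval_max_eq_iff_split_at_max[OF less.prems] by simp
    qed
  qed
qed

definition filter_index :: "('a \<Rightarrow> bool) \<Rightarrow> 'a list \<Rightarrow> nat \<Rightarrow> nat" where
  "filter_index P xs i = card {k. k < i \<and> P (xs ! k)}"

lemma filter_index_mono: "i \<le> j \<Longrightarrow> filter_index P xs i \<le> filter_index P xs j"
  unfolding filter_index_def by (rule card_mono) auto

lemma filter_index_strict_mono: "P (xs ! q) \<Longrightarrow> q < i \<Longrightarrow> filter_index P xs q < filter_index P xs i"
  unfolding filter_index_def by (rule psubset_card_mono) auto

lemma filter_index_less_iff: "P (xs ! q) \<Longrightarrow> filter_index P xs q < filter_index P xs i \<longleftrightarrow> q < i"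
  using filter_index_strict_mono[of P xs q i] filter_index_mono[of i q P xs] by (cases "q < i") auto

lemma filter_index_eq_iff:
  "P (xs ! q) \<Longrightarrow> P (xs ! q') \<Longrightarrow> filter_index P xs q = filter_index P xs q' \<longleftrightarrow> q = q'"
  using filter_index_less_iff[of P xs q q'] filter_index_less_iff[of P xs q' q]
  by (cases q q' rule: linorder_cases) auto

lemma filter_index_length: "filter_index P xs (length xs) = length (filter P xs)"
  unfolding filter_index_def by (simp add: length_filter_conv_card)

lemma filter_index_less_length:
  "q < length xs \<Longrightarrow> P (xs ! q) \<Longrightarrow> filter_index P xs q < length (filter P xs)"
  using filter_index_strict_mono[of P xs q "length xs"] by (simp add: filter_index_length)

lemma nth_filter_filter_index:
  assumes "q < length xs" "P (xs ! q)"
  shows "filter P xs ! filter_index P xs q = xs ! q"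
proof -
  have "length (filter P (take q xs)) = filter_index P xs q"
    unfolding filter_index_def length_filter_conv_card using assms(1)
    by (intro arg_cong[where f = card]) auto
  moreover have "filter P xs = filter P (take q xs) @ xs ! q # filter P (drop (Suc q) xs)"
    using assms by (subst id_take_nth_drop[OF assms(1)]) simp
  ultimately show ?thesis by (simp add: nth_append)
qed

lemma filter_index_surj:
  assumes "j < length (filter P xs)"
  obtains q where "q < length xs" "P (xs ! q)" "filter_index P xs q = j"
proof -
  define Q where "Q = {q. q < length xs \<and> P (xs ! q)}"
  have "inj_on (filter_index P xs) Q"
  proof (rule inj_onI)
    fix q q' assume "q \<in> Q" "q' \<in> Q" "filter_index P xs q = filter_index P xs q'"
    then show "q = q'"
      using filter_index_eq_iff[of P xs q q'] by (simp add: Q_def)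
  qed
  then have "card (filter_index P xs ` Q) = card {..<length (filter P xs)}"
    by (simp add: card_image Q_def length_filter_conv_card)
  moreover have "filter_index P xs ` Q \<subseteq> {..<length (filter P xs)}"
    by (auto simp: Q_def filter_index_less_length)
  ultimately have "filter_index P xs ` Q = {..<length (filter P xs)}"
    by (intro card_subset_eq) auto
  then have "j \<in> filter_index P xs ` Q"
    using assms by simp
  then show ?thesis
    using that unfolding Q_def by blast
qed

lemma filter_index_cong:
  "(\<And>k. k < i \<Longrightarrow> P (xs ! k) \<longleftrightarrow> P (ys ! k)) \<Longrightarrow> filter_index P xs i = filter_index P ys i"
  unfolding filter_index_def by (rule arg_cong[where f = card]) auto

lemma is_interval_max_filter_iff:
  assumes "k < length xs" "i \<le> p" "p \<le> k" "P (xs ! p)"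
  shows "is_interval_max (filter P xs) (filter_index P xs i) (filter_index P xs (Suc k) - 1)
      (filter_index P xs p) \<longleftrightarrow>
    (\<forall>q. i \<le> q \<longrightarrow> q \<le> k \<longrightarrow> q \<noteq> p \<longrightarrow> P (xs ! q) \<longrightarrow> xs ! q < xs ! p)"
proof -
  let ?f = "filter_index P xs"
  have pos: "?f p < ?f (Suc k)"
    using filter_index_strict_mono[of P xs p "Suc k"] assms by simp
  have bound: "?f (Suc k) - 1 < length (filter P xs)"
    using filter_index_mono[of "Suc k" "length xs" P xs] assms(1) pos
    by (simp add: filter_index_length)
  have window: "?f i \<le> ?f q \<and> ?f q \<le> ?f (Suc k) - 1 \<longleftrightarrow> i \<le> q \<and> q \<le> k"
    if "P (xs ! q)" for q
    using filter_index_less_iff[of P xs q i, OF that] filter_index_less_iff[of P xs q "Suc k", OF that] pos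
    by auto
  show ?thesis
  proof
    assume max: "is_interval_max (filter P xs) (?f i) (?f (Suc k) - 1) (?f p)"
    show "\<forall>q. i \<le> q \<longrightarrow> q \<le> k \<longrightarrow> q \<noteq> p \<longrightarrow> P (xs ! q) \<longrightarrow> xs ! q < xs ! p"
    proof (intro allI impI)
      fix q assume q: "i \<le> q" "q \<le> k" "q \<noteq> p" "P (xs ! q)"
      then have "?f q \<noteq> ?f p" "?f i \<le> ?f q" "?f q \<le> ?f (Suc k) - 1"
        using filter_index_eq_iff[of P xs q p] assms(4) window by auto
      then have "filter P xs ! ?f q < filter P xs ! ?f p"
        using max unfolding is_interval_max_def by blast
      then show "xs ! q < xs ! p"
        using q assms by (simp add: nth_filter_filter_index)
    qed
  next
    assume all: "\<forall>q. i \<le> q \<longrightarrow> q \<le> k \<longrightarrow> q \<noteq> p \<longrightarrow> P (xs ! q) \<longrightarrow> xs ! q < xs ! p"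
    show "is_interval_max (filter P xs) (?f i) (?f (Suc k) - 1) (?f p)"
      unfolding is_interval_max_def
    proof (intro conjI allI impI)
      show "?f i \<le> ?f p" "?f p \<le> ?f (Suc k) - 1"
        using window[OF assms(4)] assms by auto
      show "?f (Suc k) - 1 < length (filter P xs)"
        using bound .
    next
      fix j assume j: "?f i \<le> j" "j \<le> ?f (Suc k) - 1" "j \<noteq> ?f p"
      obtain q where q: "q < length xs" "P (xs ! q)" "?f q = j"
        using filter_index_surj[of j P xs] j bound by auto
      then have "i \<le> q" "q \<le> k" "q \<noteq> p"
        using window[of q] j by auto
      then show "filter P xs ! j < filter P xs ! ?f p"
        using all q assms by (auto simp: nth_filter_filter_index)
    qed
  qed
qed

lemma is_interval_max_transfer:
  assumes convex: "\<And>x y z. x \<in> A \<Longrightarrow> z \<in> A \<Longrightarrow> x \<le> y \<Longrightarrow> y \<le> z \<Longrightarrow> y \<in> A"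
    and len: "length xs = length ys"
    and inside: "\<And>i. i < length xs \<Longrightarrow> xs ! i \<in> A \<longleftrightarrow> ys ! i \<in> A"
    and outside: "\<And>i. i < length xs \<Longrightarrow> xs ! i \<notin> A \<Longrightarrow> xs ! i = ys ! i"
    and filtered: "is_interval_max (filter (\<lambda>x. x \<in> A) xs) = is_interval_max (filter (\<lambda>x. x \<in> A) ys)"
    and max: "is_interval_max xs i k p"
  shows "is_interval_max ys i k p"
proof -
  have window: "i \<le> p" "p \<le> k" "k < length xs"
    and less_p: "\<And>q. i \<le> q \<Longrightarrow> q \<le> k \<Longrightarrow> q \<noteq> p \<Longrightarrow> xs ! q < xs ! p"
    using max by (auto simp: is_interval_max_def)
  have "ys ! q < ys ! p" if q: "i \<le> q" "q \<le> k" "q \<noteq> p" for q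
    \<comment> \<open>comparisons between an entry inside and one outside \<open>A\<close> survive by convexity;
       comparisons inside \<open>A\<close> are read off the filtered lists\<close>
  proof (cases "xs ! p \<in> A")
    case True
    have same_index: "filter_index (\<lambda>x. x \<in> A) xs r = filter_index (\<lambda>x. x \<in> A) ys r"
      if "r \<le> Suc k" for r
      using that window inside by (intro filter_index_cong) auto
    have "\<forall>q. i \<le> q \<longrightarrow> q \<le> k \<longrightarrow> q \<noteq> p \<longrightarrow> xs ! q \<in> A \<longrightarrow> xs ! q < xs ! p"
      using less_p by blast
    then have "\<forall>q. i \<le> q \<longrightarrow> q \<le> k \<longrightarrow> q \<noteq> p \<longrightarrow> ys ! q \<in> A \<longrightarrow> ys ! q < ys ! p"
      using is_interval_max_filter_iff[of k xs i p "\<lambda>x. x \<in> A"]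
        is_interval_max_filter_iff[of k ys i p "\<lambda>x. x \<in> A"]
        filtered same_index[of i] same_index[of p] same_index[of "Suc k"] window True inside len
      by simp
    moreover have "ys ! q < ys ! p" if "ys ! q \<notin> A"
    proof (rule ccontr)
      assume "\<not> ys ! q < ys ! p"
      moreover have "xs ! q = ys ! q"
        using outside[of q] inside[of q] that q window by simp
      ultimately have "ys ! p \<le> xs ! q" "xs ! q \<le> xs ! p"
        using less_p[OF q] by simp_all
      then show False
        using convex[of "ys ! p" "xs ! p" "xs ! q"] True inside[of p] inside[of q] that q window by auto
    qed
    ultimately show ?thesis using q by blast
  next
    case False
    then have p_eq: "ys ! p = xs ! p"
      using outside window by simp
    show ?thesis
    proof (cases "xs ! q \<in> A")
      case True
      show ?thesis
      proof (rule ccontr)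
        assume "\<not> ys ! q < ys ! p"
        then have "xs ! q \<le> xs ! p" "xs ! p \<le> ys ! q"
          using less_p[OF q] p_eq by auto
        then show False
          using convex[of "xs ! q" "ys ! q" "xs ! p"] True False inside[of q] q window by auto
      qed
    next
      case False
      then show ?thesis
        using outside[of q] less_p[OF q] p_eq q window by simp
    qed
  qed
  then show ?thesis
    using window len by (auto simp: is_interval_max_def)
qed

lemma is_interval_max_eq_if_filter:
  assumes convex: "\<And>x y z. x \<in> A \<Longrightarrow> z \<in> A \<Longrightarrow> x \<le> y \<Longrightarrow> y \<le> z \<Longrightarrow> y \<in> A"
    and len: "length xs = length ys"
    and inside: "\<And>i. i < length xs \<Longrightarrow> xs ! i \<in> A \<longleftrightarrow> ys ! i \<in> A"
    and outside: "\<And>i. i < length xs \<Longrightarrow> xs ! i \<notin> A \<Longrightarrow> xs ! i = ys ! i"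
    and filtered: "is_interval_max (filter (\<lambda>x. x \<in> A) xs) = is_interval_max (filter (\<lambda>x. x \<in> A) ys)"
  shows "is_interval_max xs = is_interval_max ys"
proof -
  have inside': "ys ! i \<in> A \<longleftrightarrow> xs ! i \<in> A" if "i < length ys" for i
    using inside that len by simp
  have outside': "ys ! i = xs ! i" if "i < length ys" "ys ! i \<notin> A" for i
    using inside outside that len by fastforce
  show ?thesis
  proof (intro ext iffI)
    fix i k p
    show "is_interval_max ys i k p" if "is_interval_max xs i k p"
      using convex len inside outside filtered that by (rule is_interval_max_transfer)
    show "is_interval_max xs i k p" if "is_interval_max ys i k p"
      using convex len[symmetric] inside' outside' filtered[symmetric] that
      by (rule is_interval_max_transfer)
  qed
qed

lemma filter_eq_if_nth_agree:
  "length xs = length ys \<Longrightarrow> (\<And>i. i < length xs \<Longrightarrow> P (xs ! i) \<longleftrightarrow> P (ys ! i)) \<Longrightarrow>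
    (\<And>i. i < length xs \<Longrightarrow> P (xs ! i) \<Longrightarrow> xs ! i = ys ! i) \<Longrightarrow> filter P xs = filter P ys"
proof (induction xs ys rule: list_induct2)
  case Nil
  then show ?case by simp
next
  case (Cons x xs y ys)
  have "filter P xs = filter P ys"
  proof (rule Cons.IH)
    fix i assume "i < length xs"
    then show "P (xs ! i) \<longleftrightarrow> P (ys ! i)" and "P (xs ! i) \<Longrightarrow> xs ! i = ys ! i"
      using Cons.prems(1)[of "Suc i"] Cons.prems(2)[of "Suc i"] by simp_all
  qed
  moreover have "P x \<longleftrightarrow> P y" and "P x \<Longrightarrow> x = y"
    using Cons.prems(1)[of 0] Cons.prems(2)[of 0] by simp_all
  ultimately show ?case by simp
qed

definition replace_filter :: "('a \<Rightarrow> bool) \<Rightarrow> 'a list \<Rightarrow> 'a list \<Rightarrow> 'a list" where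
  "replace_filter P xs zs =
    map (\<lambda>i. if P (xs ! i) then zs ! filter_index P xs i else xs ! i) [0..<length xs]"

lemma length_replace_filter [simp]: "length (replace_filter P xs zs) = length xs"
  by (simp add: replace_filter_def)

lemma nth_replace_filter:
  "i < length xs \<Longrightarrow>
    replace_filter P xs zs ! i = (if P (xs ! i) then zs ! filter_index P xs i else xs ! i)"
  by (simp add: replace_filter_def)

lemma replace_filter_nth_satisfies_iff:
  assumes "mset zs = mset (filter P xs)" "i < length xs"
  shows "P (replace_filter P xs zs ! i) \<longleftrightarrow> P (xs ! i)"
proof (cases "P (xs ! i)")
  case True
  then have "filter_index P xs i < length zs"
    using filter_index_less_length[OF assms(2)] mset_eq_length[OF assms(1)] by simp
  then have "zs ! filter_index P xs i \<in> set (filter P xs)"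
    using mset_eq_setD[OF assms(1)] nth_mem by blast
  then show ?thesis
    using True assms(2) by (simp add: nth_replace_filter)
next
  case False
  then show ?thesis
    using assms(2) by (simp add: nth_replace_filter)
qed

lemma filter_replace_filter:
  assumes "mset zs = mset (filter P xs)"
  shows "filter P (replace_filter P xs zs) = zs"
proof -
  let ?ys = "replace_filter P xs zs"
  have same_index: "filter_index P ?ys i = filter_index P xs i" if "i \<le> length xs" for i
    using that replace_filter_nth_satisfies_iff[OF assms] by (intro filter_index_cong) simp
  have len: "length (filter P ?ys) = length zs"
    using same_index[of "length xs"] filter_index_length[of P ?ys] filter_index_length[of P xs]
      mset_eq_length[OF assms] by simp
  show ?thesis
  proof (rule nth_equalityI)
    fix j assume "j < length (filter P ?ys)"
    then obtain q where q: "q < length xs" "P (xs ! q)" "filter_index P xs q = j"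
      using len mset_eq_length[OF assms] filter_index_surj by metis
    then have "filter P ?ys ! j = ?ys ! q"
      using nth_filter_filter_index[of q ?ys P] same_index[of q]
        replace_filter_nth_satisfies_iff[OF assms q(1)] by simp
    also have "\<dots> = zs ! j"
      using q by (simp add: nth_replace_filter)
    finally show "filter P ?ys ! j = zs ! j" .
  qed (rule len)
qed

lemma mset_replace_filter:
  assumes "mset zs = mset (filter P xs)"
  shows "mset (replace_filter P xs zs) = mset xs"
proof -
  have "filter (\<lambda>x. \<not> P x) (replace_filter P xs zs) = filter (\<lambda>x. \<not> P x) xs"
    using replace_filter_nth_satisfies_iff[OF assms]
    by (intro filter_eq_if_nth_agree) (auto simp: nth_replace_filter)
  then show ?thesis
    using assms filter_replace_filter[OF assms]
      multiset_partition[of "mset (replace_filter P xs zs)" P] multiset_partition[of "mset xs" P]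
    by (metis mset_filter)
qed

lemma is_interval_max_replace_filter:
  assumes convex: "\<And>x y z. x \<in> A \<Longrightarrow> z \<in> A \<Longrightarrow> x \<le> y \<Longrightarrow> y \<le> z \<Longrightarrow> y \<in> A"
    and mset: "mset zs = mset (filter (\<lambda>x. x \<in> A) xs)"
    and max: "is_interval_max zs = is_interval_max (filter (\<lambda>x. x \<in> A) xs)"
  shows "is_interval_max (replace_filter (\<lambda>x. x \<in> A) xs zs) = is_interval_max xs"
proof (rule sym, rule is_interval_max_eq_if_filter[OF convex])
  show "is_interval_max (filter (\<lambda>x. x \<in> A) xs) =
      is_interval_max (filter (\<lambda>x. x \<in> A) (replace_filter (\<lambda>x. x \<in> A) xs zs))"
    using max by (simp add: filter_replace_filter[OF mset])
qed (use replace_filter_nth_satisfies_iff[OF mset] in \<open>auto simp: nth_replace_filter\<close>)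

lemma perms_mset_eq:
  assumes "xs \<in> perms n" "mset ys = mset xs"
  shows "ys \<in> perms n"
  using assms(1) mset_eq_imp_distinct_iff[OF assms(2)] mset_eq_setD[OF assms(2)]
  by (simp add: perms_def)

lemma pbar_in_perms: "\<sigma> \<in> perms m \<Longrightarrow> pbar \<sigma> \<in> perms m"
  using gam_in_perms[of "lam \<sigma>"] size_lam by (simp add: pbar_def)

lemma is_interval_max_pbar:
  assumes "\<sigma> \<in> perms m"
  shows "is_interval_max (pbar \<sigma>) = is_interval_max \<sigma>"
  using lam_eq_iff_interval_max_eq[OF pbar_in_perms[OF assms] assms] by (simp add: pbar_def lam_gam)

lemma bar_int_eq_replace_filter:
  assumes "distinct \<tau>"
  shows "bar_int \<tau> a b = replace_filter (\<lambda>x. x \<in> {a..b}) \<tau>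
    (map ((+) (a - 1)) (pbar (st (filter (\<lambda>x. x \<in> {a..b}) \<tau>))))"
proof -
  let ?w = "filter (\<lambda>x. x \<in> {a..b}) \<tau>"
  have "length (pbar (st ?w)) = length ?w"
    using length_perms[OF pbar_in_perms[OF st_in_perms]] assms by simp
  then have "filter_index (\<lambda>x. x \<in> {a..b}) \<tau> i < length (pbar (st ?w))"
    if "i < length \<tau>" "\<tau> ! i \<in> {a..b}" for i
    using filter_index_less_length[of i \<tau> "\<lambda>x. x \<in> {a..b}"] that by simp
  then show ?thesis
    unfolding bar_int_def replace_filter_def Let_def filter_index_def
    by (auto intro!: map_cong)
qed

lemma is_interval_max_shifted_pbar_st:
  assumes "distinct w"
  shows "is_interval_max (map ((+) c) (pbar (st w))) = is_interval_max w"
proof -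
  have "st (map ((+) c) (pbar (st w))) = pbar (st w)"
    unfolding st_map_add using pbar_in_perms[OF st_in_perms[OF assms]] by (rule st_perms_id)
  then show ?thesis
    using is_interval_max_st[of "map ((+) c) (pbar (st w))"] is_interval_max_st[of w]
      is_interval_max_pbar[OF st_in_perms[OF assms]] by simp
qed

lemma mset_shifted_pbar_st_filter:
  assumes "\<tau> \<in> perms n" "1 \<le> a" "b \<le> n"
  defines "w \<equiv> filter (\<lambda>x. x \<in> {a..b}) \<tau>"
  shows "mset (map ((+) (a - 1)) (pbar (st w))) = mset w"
proof -
  have distinct: "distinct w" and set_w: "set w = {a..b}"
    using assms by (auto simp: perms_def w_def)
  then have "pbar (st w) \<in> perms (Suc b - a)"
    using pbar_in_perms[OF st_in_perms[OF distinct]] distinct_card[OF distinct] by simp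
  moreover have "(+) (a - 1) ` {1..Suc b - a} = {a..b}"
    using assms(2) by (simp only: image_add_atLeastAtMost) auto
  ultimately have "set (map ((+) (a - 1)) (pbar (st w))) = set w"
    "distinct (map ((+) (a - 1)) (pbar (st w)))"
    using set_w by (auto simp: perms_def distinct_map)
  then show ?thesis
    using set_eq_iff_mset_eq_distinct distinct by blast
qed

theorem lemma6p2:
  fixes n a b :: nat and \<tau> :: "nat list"
  assumes "n \<ge> 1" and "\<tau> \<in> perms n" and "1 \<le> a" and "a < b" and "b \<le> n"
  shows "lam \<tau> = lam (bar_int \<tau> a b)"
proof -
  let ?w = "filter (\<lambda>x. x \<in> {a..b}) \<tau>"
  define zs where "zs = map ((+) (a - 1)) (pbar (st ?w))"
  have distinct: "distinct \<tau>"
    using assms(2) by (simp add: perms_def)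
  have mset_zs: "mset zs = mset ?w"
    unfolding zs_def using assms(2,3,5) by (rule mset_shifted_pbar_st_filter)
  have max_zs: "is_interval_max zs = is_interval_max ?w"
    unfolding zs_def using distinct by (simp add: is_interval_max_shifted_pbar_st)
  have bar: "bar_int \<tau> a b = replace_filter (\<lambda>x. x \<in> {a..b}) \<tau> zs"
    unfolding zs_def using distinct by (rule bar_int_eq_replace_filter)
  have "bar_int \<tau> a b \<in> perms n"
    unfolding bar using assms(2) mset_replace_filter[OF mset_zs] by (rule perms_mset_eq)
  moreover have "is_interval_max (bar_int \<tau> a b) = is_interval_max \<tau>"
    unfolding bar using mset_zs max_zs by (intro is_interval_max_replace_filter) auto
  ultimately show ?thesis
    using lam_eq_iff_interval_max_eq[OF assms(2)] by simp
qed

end
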